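(* Let $G_1,G_2$ be directed graphs on $[n]$ without self-loops with $\mathcal{P}(G_1)=\mathcal{P}(G_2)$, and let $\pi$ be a permutation of $[n]$ such that $I+B_{G_2}=P_\pi(I+B_{G_1})$. Write $\pi=c_1c_2\cdots c_k$ as a product of disjoint cycles $c_j=(i^j_1,i^j_2,\dots,i^j_{n_j})$ with $n_j\ge2$ (fixed points omitted). Then for each $j\in[k]$, $x_{i^j_1}\to x_{i^j_2}\to\cdots\to x_{i^j_{n_j}}\to x_{i^j_1}$ is a directed cycle in $G_1$, and $x_{i^j_1}\leftarrow x_{i^j_2}\leftarrow\cdots\leftarrow x_{i^j_{n_j}}\leftarrow x_{i^j_1}$ is a directed cycle in $G_2$.
   Context: For a directed graph $G$ on $[n]$ (vertex $i$ identified with variable $x_i$) without self-loops, $B_G\in\{0,1\}^{n\times n}$ has $[B_G]_{ij}=1$ iff there is an edge $j\to i$. $P_\pi$ is the permutation matrix whose $i$-th row is the standard basis row vector $u_{\pi(i)}$, so the $i$-th row of $P_\pi A$ is the $\pi(i)$-th row of $A$. A cycle $(i_1,\dots,i_\ell)$ of a permutation maps $i_r\mapsto i_{r+1}$ and $i_\ell\mapsto i_1$. $\mathcal{P}(G)$ is the set of all distributions of $\mathbf{x}=(I-W)^{-1}\mathbf{e}$ where $W$ has nonzero pattern exactly that of $B_G$, $I-W$ is invertible, and $\mathbf{e}$ has jointly independent components with at most one Gaussian. *)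

theory Defs
  imports "HOL-Probability.Probability"
begin

text \<open>A directed graph on the finite vertex type 'n is an edge relation E,
  where E j i means there is an edge j -> i.\<close>

definition no_self_loops :: "('n \<Rightarrow> 'n \<Rightarrow> bool) \<Rightarrow> bool" where
  "no_self_loops E \<longleftrightarrow> (\<forall>i. \<not> E i i)"

definition B_mat :: "('n::finite \<Rightarrow> 'n \<Rightarrow> bool) \<Rightarrow> real^'n^'n" where
  "B_mat E = (\<chi> i j. if E j i then 1 else 0)"

definition perm_mat :: "('n::finite \<Rightarrow> 'n) \<Rightarrow> real^'n^'n" where
  "perm_mat p = (\<chi> i j. if j = p i then 1 else 0)"

definition is_gaussian :: "real measure \<Rightarrow> bool" where
  "is_gaussian D \<longleftrightarrow> (\<exists>\<mu> \<sigma>. \<sigma> > 0 \<and> D = density lborel (normal_density \<mu> \<sigma>))"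

text \<open>The model P(G): all distributions of x = (I - W)^-1 e, where W has nonzero
  pattern exactly that of B_G, I - W is invertible, and e has jointly independent
  components (i.e. its joint law is the product of its marginals D i), at most one
  of which is Gaussian.\<close>
definition model_dists :: "('n::finite \<Rightarrow> 'n \<Rightarrow> bool) \<Rightarrow> (real^'n) measure set" where
  "model_dists E =
     {distr (PiM UNIV D) borel (\<lambda>f. matrix_inv (mat 1 - W) *v (\<chi> i. f i)) | D W.
        (\<forall>i j. W $ i $ j \<noteq> 0 \<longleftrightarrow> E j i) \<and>
        invertible (mat 1 - W) \<and>
        (\<forall>i. prob_space (D i) \<and> sets (D i) = sets borel) \<and>
        card {i. is_gaussian (D i)} \<le> 1}"

end

theory Submission
  imports Defs
begin

(* Reading the relation I + B_G2 = P_pi (I + B_G1) entrywise: the diagonal entry (i, i) of the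
   left side is 1 since G2 has no self-loops, so (I + B_G1) has a 1 at (pi i, i), which off the
   diagonal means an edge i -> pi i in G1.  Likewise the entry (i, pi i) on the right is the
   diagonal entry (pi i, pi i) of I + B_G1, so G2 has an edge pi i -> i. *)

lemma perm_mat_mult_nth:
  "(perm_mat p ** (A::real^'n::finite^'n)) $ i $ j = A $ p i $ j"
  by (simp add: perm_mat_def matrix_matrix_mult_def if_distrib[of "\<lambda>x. x * _"] cong: if_cong)

lemma mat_1_plus_B_mat_nth:
  "(mat 1 + B_mat E) $ i $ j = (if i = j then 1 else 0) + (if E j i then 1 else (0::real))"
  by (simp add: B_mat_def mat_def)

lemma row_permuted_graphs_edges:
  assumes "no_self_loops G1" and "no_self_loops G2"
    and perm: "mat 1 + B_mat G2 = perm_mat \<pi> ** (mat 1 + B_mat G1)"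
    and moved: "\<pi> i \<noteq> i"
  shows "G1 i (\<pi> i)" and "G2 (\<pi> i) i"
proof -
  have entry: "(mat 1 + B_mat G2) $ k $ l = (mat 1 + B_mat G1) $ \<pi> k $ l" for k l
    using perm by (simp add: perm_mat_mult_nth)
  have "\<not> G1 k k" and "\<not> G2 k k" for k
    using assms(1,2) by (auto simp: no_self_loops_def)
  with moved show "G1 i (\<pi> i)" and "G2 (\<pi> i) i"
    using entry[of i i, unfolded mat_1_plus_B_mat_nth]
      entry[of i "\<pi> i", unfolded mat_1_plus_B_mat_nth]
    by (auto split: if_splits)
qed

lemma distinct_nth_succ_mod_neq:
  assumes "distinct cs" and "length cs \<ge> 2" and "r < length cs"
  shows "cs ! ((r + 1) mod length cs) \<noteq> cs ! r"
proof -
  have "(r + 1) mod length cs \<noteq> r"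
  proof (cases "r + 1 < length cs")
    case False
    with assms(3) have "r + 1 = length cs" by simp
    with assms(2) show ?thesis by simp
  qed simp
  moreover have "(r + 1) mod length cs < length cs"
    using assms(3) by (metis mod_less_divisor not_less_zero gr0I)
  ultimately show ?thesis
    using assms(1,3) by (simp add: nth_eq_iff_index_eq)
qed

theorem proposition3:
  fixes G1 G2 :: "'n::finite \<Rightarrow> 'n \<Rightarrow> bool" and \<pi> :: "'n \<Rightarrow> 'n"
  assumes "no_self_loops G1" and "no_self_loops G2"
    and "model_dists G1 = model_dists G2"
    and "\<pi> permutes UNIV"
    and "mat 1 + B_mat G2 = perm_mat \<pi> ** (mat 1 + B_mat G1)"
  shows "\<forall>cs. distinct cs \<and> length cs \<ge> 2 \<and>
           (\<forall>r < length cs. \<pi> (cs ! r) = cs ! ((r + 1) mod length cs)) \<longrightarrow>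
           (\<forall>r < length cs. G1 (cs ! r) (cs ! ((r + 1) mod length cs)) \<and>
                            G2 (cs ! ((r + 1) mod length cs)) (cs ! r))"
proof (intro allI impI)
  fix cs r
  assume "distinct cs \<and> length cs \<ge> 2 \<and>
           (\<forall>r < length cs. \<pi> (cs ! r) = cs ! ((r + 1) mod length cs))"
    and r: "r < length cs"
  then have "distinct cs" and "length cs \<ge> 2"
    and succ: "\<pi> (cs ! r) = cs ! ((r + 1) mod length cs)"
    by auto
  with r have "\<pi> (cs ! r) \<noteq> cs ! r"
    using distinct_nth_succ_mod_neq by metis
  from row_permuted_graphs_edges[OF assms(1,2,5) this] succ
  show "G1 (cs ! r) (cs ! ((r + 1) mod length cs)) \<and> G2 (cs ! ((r + 1) mod length cs)) (cs ! r)"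
    by simp
qed

end
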